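(* Let $\alpha\in\mathbb R$ and let $\Sigma$ be a round sphere in $\mathbb R^3$ (with the origin removed if it lies on it). Then $\Sigma$ is $\alpha$-stationary if and only if either (1) $\alpha=-2$ and $\Sigma$ is centered at the origin, or (2) $\alpha=-4$ and $\Sigma$ contains the origin.
   Context: Let $\Sigma$ be a connected oriented surface immersed in $\mathbb R^3\setminus\{0\}$ with unit normal $\nu$ and mean curvature $H$ (sum of the principal curvatures, so a sphere of radius $r$ has $H=2/r$ for the inward normal). For $\alpha\in\mathbb R$, $\Sigma$ is called $\alpha$-stationary if $H(p)=\alpha\,\frac{\langle\nu(p),p\rangle}{|p|^2}$ for all $p\in\Sigma$. *)

theory Defs
  imports "HOL-Analysis.Analysis"
begin

text \<open>Mean curvature (sum of principal curvatures) at p of an oriented surface whose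
  unit normal field is (the restriction of) the differentiable map N, defined on a
  neighbourhood of the surface: H = - tr(dN restricted to the tangent plane)
  = -(tr dN - <dN(N p), N p>).  With this convention the round sphere of radius r
  with inward normal has H = 2/r.\<close>
definition mean_curvature :: "(real^3 \<Rightarrow> real^3) \<Rightarrow> real^3 \<Rightarrow> real" where
  "mean_curvature N p =
     - ((\<Sum>i\<in>Basis. inner (frechet_derivative N (at p) i) i)
        - inner (frechet_derivative N (at p) (N p)) (N p))"

text \<open>Unit normal field of the round sphere with centre c and radius r;
  s = 1 gives the inward normal, s = -1 the outward normal (the two orientations).\<close>
definition sphere_normal :: "real^3 \<Rightarrow> real \<Rightarrow> real \<Rightarrow> real^3 \<Rightarrow> real^3" where
  "sphere_normal c r s x = (s / r) *\<^sub>R (c - x)"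

definition alpha_stationary :: "real \<Rightarrow> (real^3) set \<Rightarrow> (real^3 \<Rightarrow> real^3) \<Rightarrow> bool" where
  "alpha_stationary \<alpha> S N \<longleftrightarrow>
     (\<forall>p\<in>S. mean_curvature N p = \<alpha> * inner (N p) p / (norm p)^2)"

end

theory Submission
  imports Defs
begin

text \<open>The normal field of a sphere of radius r is an affine map with linear part -(s/r) id,
  so the mean curvature is the constant 2s/r. On the sphere |p|^2 = 2<c,p> + r^2 - |c|^2,
  which turns the stationarity equation into the affine condition
  (4 + \<alpha>) <c,p> + (2 + \<alpha>)(r^2 - |c|^2) = 0 in <c,p>. The punctured sphere still carries
  two distinct values of <c,p> when c \<noteq> 0 (at c + r u with u \<bottom> c and at the far pole),
  forcing \<alpha> = -4 and |c| = r; for c = 0 the condition reads (2 + \<alpha>) r^2 = 0.\<close>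

lemma sphere_normal_has_derivative:
  "(sphere_normal c r s has_derivative (\<lambda>v. - (s / r) *\<^sub>R v)) (at p)"
  unfolding sphere_normal_def [abs_def]
  by (auto intro!: derivative_eq_intros simp: algebra_simps)

lemma norm_sphere_normal:
  assumes "r > 0" "\<bar>s\<bar> = 1" "dist c p = r"
  shows "norm (sphere_normal c r s p) = 1"
  using assms by (simp add: sphere_normal_def dist_norm)

lemma mean_curvature_sphere_normal:
  assumes "r > 0" "\<bar>s\<bar> = 1" "dist c p = r"
  shows "mean_curvature (sphere_normal c r s) p = 2 * s / r"
proof -
  have dN: "frechet_derivative (sphere_normal c r s) (at p) = (\<lambda>v. - (s / r) *\<^sub>R v)"
    using frechet_derivative_at [OF sphere_normal_has_derivative] by simp
  have trace: "(\<Sum>i\<in>(Basis :: (real^3) set). inner (- (s / r) *\<^sub>R i) i) = - (s / r) * 3"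
    by (simp add: inner_Basis sum_distrib_left [symmetric])
  have "inner (sphere_normal c r s p) (sphere_normal c r s p) = 1"
    using norm_sphere_normal [OF assms] by (simp add: power2_norm_eq_inner [symmetric])
  then show ?thesis
    unfolding mean_curvature_def dN trace by simp
qed

lemma stationarity_defect_on_sphere:
  fixes c p :: "'a::real_inner"
  assumes "dist c p = r"
  shows "2 * (norm p)^2 - \<alpha> * inner (c - p) p
           = (4 + \<alpha>) * inner c p + (2 + \<alpha>) * (r^2 - (norm c)^2)"
proof -
  have "r^2 = inner (c - p) (c - p)"
    using assms by (simp add: dist_norm flip: power2_norm_eq_inner)
  also have "\<dots> = (norm p)^2 - 2 * inner c p + (norm c)^2"
    by (simp add: inner_diff power2_norm_eq_inner inner_commute)
  finally have r2: "r^2 = (norm p)^2 - 2 * inner c p + (norm c)^2" .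
  show ?thesis
    unfolding r2 by (simp add: inner_diff_left power2_norm_eq_inner algebra_simps)
qed

lemma alpha_stationary_sphere_iff:
  assumes "r > 0" "s \<in> {1, -1}"
  shows "alpha_stationary \<alpha> (sphere c r - {0}) (sphere_normal c r s) \<longleftrightarrow>
           (\<forall>p \<in> sphere c r - {0}. (4 + \<alpha>) * inner c p + (2 + \<alpha>) * (r^2 - (norm c)^2) = 0)"
proof -
  have "mean_curvature (sphere_normal c r s) p = \<alpha> * inner (sphere_normal c r s p) p / (norm p)^2
          \<longleftrightarrow> (4 + \<alpha>) * inner c p + (2 + \<alpha>) * (r^2 - (norm c)^2) = 0"
    if p: "p \<in> sphere c r - {0}" for p
  proof -
    have "s \<noteq> 0" "\<bar>s\<bar> = 1" "(norm p)^2 > 0"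
      using assms(2) p by auto
    moreover have "inner (sphere_normal c r s p) p = s / r * inner (c - p) p"
      by (simp add: sphere_normal_def)
    ultimately have "2 * s / r = \<alpha> * inner (sphere_normal c r s p) p / (norm p)^2
                 \<longleftrightarrow> 2 * (norm p)^2 - \<alpha> * inner (c - p) p = 0"
      using assms(1) by (auto simp: field_simps)
    then show ?thesis
      using p assms(1) \<open>\<bar>s\<bar> = 1\<close>
      by (simp add: mean_curvature_sphere_normal stationarity_defect_on_sphere)
  qed
  then show ?thesis
    unfolding alpha_stationary_def by blast
qed

lemma affine_in_inner_vanishing_on_punctured_sphere:
  fixes c :: "'a::euclidean_space"
  assumes "2 \<le> DIM('a)" "r > 0"
    and vanish: "\<forall>p \<in> sphere c r - {0}. a * inner c p + b = 0"
  shows "b = 0 \<and> (a = 0 \<or> c = 0)"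
proof -
  obtain u where "u \<noteq> 0" "orthogonal c u"
    using orthogonal_to_vector_exists [OF assms(1)] .
  define e where "e = u /\<^sub>R norm u"
  have e: "norm e = 1" "inner c e = 0"
    using \<open>u \<noteq> 0\<close> \<open>orthogonal c u\<close> by (auto simp: e_def orthogonal_def)
  have "inner e e = 1"
    using e by (simp flip: power2_norm_eq_inner)
  then have "inner (c + r *\<^sub>R e) (c + r *\<^sub>R e) = inner c c + r^2"
    using e by (simp add: inner_add_left inner_add_right inner_commute power2_eq_square)
  then have "(norm (c + r *\<^sub>R e))^2 = (norm c)^2 + r^2"
    by (simp add: power2_norm_eq_inner)
  then have "c + r *\<^sub>R e \<in> sphere c r - {0}"
    using e assms(2) by (auto simp: dist_norm)
  moreover have "inner c (c + r *\<^sub>R e) = (norm c)^2"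
    using e by (simp add: inner_add_right power2_norm_eq_inner)
  ultimately have equator: "a * (norm c)^2 + b = 0"
    using vanish by metis
  show ?thesis
  proof (cases "c = 0")
    case True
    with equator show ?thesis by simp
  next
    case False
    define q where "q = (1 + r / norm c) *\<^sub>R c"
    have "1 + r / norm c > 0"
      using False assms(2) by (simp add: add_pos_pos)
    then have "q \<noteq> 0"
      using False by (simp add: q_def)
    moreover have "c - q = - (r / norm c) *\<^sub>R c"
      by (simp add: q_def algebra_simps)
    ultimately have "q \<in> sphere c r - {0}"
      using False assms(2) by (simp add: dist_norm)
    with vanish have far_pole: "a * ((1 + r / norm c) * (norm c)^2) + b = 0"
      by (force simp: q_def power2_norm_eq_inner)
    have "(1 + r / norm c) * (norm c)^2 = (norm c)^2 + r * norm c"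
      using False by (simp add: field_simps power2_eq_square)
    with far_pole have "a * (norm c)^2 + a * (r * norm c) + b = 0"
      by (simp add: distrib_left)
    with equator have "a * (r * norm c) = 0"
      by linarith
    then have "a = 0"
      using False assms(2) by simp
    with equator show ?thesis by simp
  qed
qed

theorem mainTheorem3:
  fixes \<alpha> r s :: real and c :: "real^3"
  assumes "r > 0" and "s \<in> {1, -1}"
  shows "alpha_stationary \<alpha> (sphere c r - {0}) (sphere_normal c r s) \<longleftrightarrow>
           ((\<alpha> = -2 \<and> c = 0) \<or> (\<alpha> = -4 \<and> 0 \<in> sphere c r))"
  unfolding alpha_stationary_sphere_iff [OF assms]
proof
  assume "\<forall>p \<in> sphere c r - {0}. (4 + \<alpha>) * inner c p + (2 + \<alpha>) * (r^2 - (norm c)^2) = 0"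
  then have "(2 + \<alpha>) * (r^2 - (norm c)^2) = 0 \<and> (4 + \<alpha> = 0 \<or> c = 0)"
    by (intro affine_in_inner_vanishing_on_punctured_sphere) (use assms(1) in auto)
  then show "(\<alpha> = -2 \<and> c = 0) \<or> (\<alpha> = -4 \<and> 0 \<in> sphere c r)"
    using assms(1) by (auto simp: power2_eq_iff)
next
  assume "(\<alpha> = -2 \<and> c = 0) \<or> (\<alpha> = -4 \<and> 0 \<in> sphere c r)"
  then show "\<forall>p \<in> sphere c r - {0}. (4 + \<alpha>) * inner c p + (2 + \<alpha>) * (r^2 - (norm c)^2) = 0"
    by auto
qed

end
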